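(* Let $n>2$ be an even integer and let $\Phi^{(n,n/2)}:M_n\to M_n$ be defined by $\Phi^{(n,n/2)}([a_{ij}])=\operatorname{diag}(b_1,\dots,b_n)-[a_{ij}]$ with $b_i=(n-1)a_{ii}+a_{\sigma(i),\sigma(i)}$, where $\sigma(i)\equiv i+n/2\pmod n$, $\sigma(i)\in\{1,\dots,n\}$. Then $\Phi^{(n,n/2)}$ is a decomposable positive linear map.
   Context: A linear map $\phi:M_n\to M_n$ is decomposable if $\phi=\phi_1+\phi_2$ where $\phi_1$ is completely positive and $\phi_2$ is completely copositive (i.e. $\phi_2$ composed with the transpose map is completely positive). *)

theory Defs
  imports Complex_Main
begin

text \<open>Square complex matrices of size n are represented as functions
  nat \<Rightarrow> nat \<Rightarrow> complex; only the entries with indices i, j < n matter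
  (indices are 0-based: 0..n-1 corresponds to 1..n).\<close>

type_synonym cmat = "nat \<Rightarrow> nat \<Rightarrow> complex"

definition psd :: "nat \<Rightarrow> cmat \<Rightarrow> bool" where
  "psd m A \<longleftrightarrow> (\<forall>x :: nat \<Rightarrow> complex.
     let q = (\<Sum>i<m. \<Sum>j<m. cnj (x i) * A i j * x j) in Im q = 0 \<and> Re q \<ge> 0)"

definition mat_transpose :: "cmat \<Rightarrow> cmat" where
  "mat_transpose A = (\<lambda>i j. A j i)"

definition linear_map_n :: "nat \<Rightarrow> (cmat \<Rightarrow> cmat) \<Rightarrow> bool" where
  "linear_map_n n \<phi> \<longleftrightarrow> (\<forall>A B c i j. i < n \<longrightarrow> j < n \<longrightarrow>
      \<phi> (\<lambda>a b. A a b + B a b) i j = \<phi> A i j + \<phi> B i j \<and>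
      \<phi> (\<lambda>a b. c * A a b) i j = c * \<phi> A i j)"

definition positive_map :: "nat \<Rightarrow> (cmat \<Rightarrow> cmat) \<Rightarrow> bool" where
  "positive_map n \<phi> \<longleftrightarrow> (\<forall>A. psd n A \<longrightarrow> psd n (\<phi> A))"

text \<open>A k x k block matrix with n x n blocks X p q, viewed as a (k n) x (k n) matrix.\<close>
definition flatten :: "nat \<Rightarrow> (nat \<Rightarrow> nat \<Rightarrow> cmat) \<Rightarrow> cmat" where
  "flatten n X = (\<lambda>i j. X (i div n) (j div n) (i mod n) (j mod n))"

text \<open>Complete positivity: id_k \<otimes> \<phi> is positive on M_k(M_n) for every k.\<close>
definition completely_positive :: "nat \<Rightarrow> (cmat \<Rightarrow> cmat) \<Rightarrow> bool" where
  "completely_positive n \<phi> \<longleftrightarrow> (\<forall>k X. psd (k * n) (flatten n X) \<longrightarrow>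
      psd (k * n) (flatten n (\<lambda>p q. \<phi> (X p q))))"

definition completely_copositive :: "nat \<Rightarrow> (cmat \<Rightarrow> cmat) \<Rightarrow> bool" where
  "completely_copositive n \<phi> \<longleftrightarrow> completely_positive n (\<phi> \<circ> mat_transpose)"

definition decomposable :: "nat \<Rightarrow> (cmat \<Rightarrow> cmat) \<Rightarrow> bool" where
  "decomposable n \<phi> \<longleftrightarrow> (\<exists>\<phi>1 \<phi>2. linear_map_n n \<phi>1 \<and> linear_map_n n \<phi>2 \<and>
      completely_positive n \<phi>1 \<and> completely_copositive n \<phi>2 \<and>
      (\<forall>A i j. i < n \<longrightarrow> j < n \<longrightarrow> \<phi> A i j = \<phi>1 A i j + \<phi>2 A i j))"

definition sigma_shift :: "nat \<Rightarrow> nat \<Rightarrow> nat" where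
  "sigma_shift n i = (i + n div 2) mod n"

definition Phi :: "nat \<Rightarrow> cmat \<Rightarrow> cmat" where
  "Phi n A = (\<lambda>i j. (if i = j then (of_nat n - 1) * A i i
                      + A (sigma_shift n i) (sigma_shift n i) else 0) - A i j)"

end

theory Submission
  imports Defs "HOL-Library.Complex_Order"
begin

text \<open>Write \<open>L_G(A)\<close> for the Schur product of \<open>A\<close> with the Laplacian of a graph \<open>G\<close> on
  \<open>{1..n}\<close>. Then \<open>\<Phi>(A) = L_G(A) + L_H(S A\<^sup>T S)\<close>, where \<open>H\<close> is the perfect matching
  \<open>{i, \<sigma>(i)}\<close>, \<open>G\<close> is its complement in the complete graph, and \<open>S\<close> is the permutation
  matrix of \<open>\<sigma>\<close>. Since the Laplacian is the sum of \<open>(e\<^sub>i - e\<^sub>j)(e\<^sub>i - e\<^sub>j)\<^sup>*\<close> over the edges, the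
  quadratic form of \<open>L_G(A)\<close> at \<open>u\<close> is a sum of quadratic forms of \<open>A\<close> at the vectors
  \<open>u\<^sub>i e\<^sub>i - u\<^sub>j e\<^sub>j\<close>; such a Kraus-type representation survives tensoring with \<open>id\<^sub>k\<close>,
  so \<open>L_G\<close> is completely positive. Hence the first summand is completely positive, the
  second completely copositive, and a decomposable map is positive.\<close>

definition sesq_form :: "nat \<Rightarrow> cmat \<Rightarrow> (nat \<Rightarrow> complex) \<Rightarrow> (nat \<Rightarrow> complex) \<Rightarrow> complex" where
  "sesq_form m A u v = (\<Sum>i<m. \<Sum>j<m. cnj (u i) * A i j * v j)"

lemma psd_iff_sesq_form_nonneg: "psd m A \<longleftrightarrow> (\<forall>x. 0 \<le> sesq_form m A x x)"
  by (simp add: psd_def sesq_form_def less_eq_complex_def Let_def) blast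

lemma sesq_form_cong:
  assumes "\<And>i j. i < m \<Longrightarrow> j < m \<Longrightarrow> A i j = B i j"
  shows "sesq_form m A u v = sesq_form m B u v"
  unfolding sesq_form_def using assms by (intro sum.cong refl) auto

lemma psd_add:
  assumes "psd m A" "psd m B" and "\<And>i j. i < m \<Longrightarrow> j < m \<Longrightarrow> C i j = A i j + B i j"
  shows "psd m C"
proof -
  have "sesq_form m C x x = sesq_form m A x x + sesq_form m B x x" for x
    unfolding sesq_form_def using assms(3)
    by (simp add: distrib_left distrib_right sum.distrib)
  then show ?thesis
    using assms(1,2) by (simp add: psd_iff_sesq_form_nonneg add_nonneg_nonneg)
qed

lemma sesq_form_transpose:
  "sesq_form m (mat_transpose A) x x = sesq_form m A (\<lambda>i. cnj (x i)) (\<lambda>i. cnj (x i))"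
proof -
  have "sesq_form m (mat_transpose A) x x = (\<Sum>j<m. \<Sum>i<m. cnj (x i) * A j i * x j)"
    unfolding sesq_form_def mat_transpose_def by (rule sum.swap)
  then show ?thesis
    unfolding sesq_form_def by (simp add: algebra_simps)
qed

lemma psd_transpose: "psd m A \<Longrightarrow> psd m (mat_transpose A)"
  by (simp add: psd_iff_sesq_form_nonneg sesq_form_transpose)

lemma sum_lessThan_mult:
  fixes k n :: nat
  shows "(\<Sum>I<k * n. f I) = (\<Sum>p<k. \<Sum>i<n. f (p * n + i))"
proof -
  have "(\<Sum>I<k * n. f I) = (\<Sum>p<k. \<Sum>I\<in>{p * n..<p * n + n}. f I)"
    by (rule sum.nat_group[where g=f and k=n and n=k, symmetric])
  also have "\<dots> = (\<Sum>p<k. \<Sum>i<n. f (p * n + i))"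
    by (simp add: sum.shift_bounds_nat_ivl[of f 0 _ n, simplified] atLeast0LessThan add.commute)
  finally show ?thesis .
qed

definition block_form :: "nat \<Rightarrow> nat \<Rightarrow> (nat \<Rightarrow> nat \<Rightarrow> cmat) \<Rightarrow> (nat \<Rightarrow> nat \<Rightarrow> complex) \<Rightarrow> complex"
  where "block_form k n X y = (\<Sum>p<k. \<Sum>q<k. sesq_form n (X p q) (y p) (y q))"

lemma sesq_form_flatten:
  assumes "n > 0"
  shows "sesq_form (k * n) (flatten n X) x x = block_form k n X (\<lambda>p i. x (p * n + i))"
proof -
  have "sesq_form (k * n) (flatten n X) x x
     = (\<Sum>p<k. \<Sum>i<n. \<Sum>q<k. \<Sum>j<n. cnj (x (p * n + i)) * X p q i j * x (q * n + j))"
    using assms by (simp add: sesq_form_def sum_lessThan_mult flatten_def)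
  also have "\<dots> = (\<Sum>p<k. \<Sum>q<k. \<Sum>i<n. \<Sum>j<n. cnj (x (p * n + i)) * X p q i j * x (q * n + j))"
    by (intro sum.cong refl sum.swap)
  finally show ?thesis
    by (simp add: block_form_def sesq_form_def)
qed

lemma psd_flatten_iff:
  assumes "n > 0"
  shows "psd (k * n) (flatten n X) \<longleftrightarrow> (\<forall>y. 0 \<le> block_form k n X y)"
proof
  assume psd: "psd (k * n) (flatten n X)"
  show "\<forall>y. 0 \<le> block_form k n X y"
  proof
    fix y
    define x :: "nat \<Rightarrow> complex" where "x I = y (I div n) (I mod n)" for I
    have "block_form k n X y = block_form k n X (\<lambda>p i. x (p * n + i))"
      unfolding block_form_def sesq_form_def x_def using assms by (intro sum.cong refl) auto
    also have "\<dots> = sesq_form (k * n) (flatten n X) x x"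
      by (rule sesq_form_flatten[OF assms, symmetric])
    finally show "0 \<le> block_form k n X y"
      using psd by (simp add: psd_iff_sesq_form_nonneg)
  qed
qed (simp add: psd_iff_sesq_form_nonneg sesq_form_flatten[OF assms])

lemma nonneg_if_of_real_mult_nonneg:
  fixes z :: complex
  assumes "c > 0" and "0 \<le> of_real c * z"
  shows "0 \<le> z"
  using assms by (simp add: less_eq_complex_def zero_le_mult_iff)

text \<open>The Kraus-type identity applies blockwise, so it transfers positivity in \<open>M\<^sub>k(M\<^sub>n)\<close>.\<close>

lemma completely_positive_if_kraus:
  assumes "n > 0" and "finite R" and "c > 0"
    and kraus: "\<And>M u v. of_real c * sesq_form n (\<phi> M) u v = (\<Sum>r\<in>R. sesq_form n M (g r u) (g r v))"
  shows "completely_positive n \<phi>"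
  unfolding completely_positive_def psd_flatten_iff[OF assms(1)]
proof (intro allI impI)
  fix k X y
  assume X: "\<forall>y. 0 \<le> block_form k n X y"
  have "of_real c * block_form k n (\<lambda>p q. \<phi> (X p q)) y
      = (\<Sum>p<k. \<Sum>q<k. \<Sum>r\<in>R. sesq_form n (X p q) (g r (y p)) (g r (y q)))"
    by (simp add: block_form_def sum_distrib_left kraus)
  also have "\<dots> = (\<Sum>r\<in>R. block_form k n X (\<lambda>p. g r (y p)))"
    unfolding block_form_def by (simp add: sum.swap[of _ R])
  also have "\<dots> \<ge> 0"
    using X by (simp add: sum_nonneg)
  finally show "0 \<le> block_form k n (\<lambda>p q. \<phi> (X p q)) y"
    using assms(3) by (rule nonneg_if_of_real_mult_nonneg[rotated])
qed

lemma psd_flatten_single: "psd n (flatten n (\<lambda>_ _. A)) \<longleftrightarrow> psd n A"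
proof -
  have "sesq_form n (flatten n (\<lambda>_ _. A)) x x = sesq_form n A x x" for x
    by (rule sesq_form_cong) (simp add: flatten_def)
  then show ?thesis
    by (simp add: psd_iff_sesq_form_nonneg)
qed

lemma completely_positive_imp_positive:
  assumes "completely_positive n \<phi>"
  shows "positive_map n \<phi>"
  unfolding positive_map_def
proof (intro allI impI)
  fix A
  assume "psd n A"
  then have "psd (1 * n) (flatten n (\<lambda>_ _. A))"
    by (simp add: psd_flatten_single)
  then have "psd (1 * n) (flatten n (\<lambda>_ _. \<phi> A))"
    using assms unfolding completely_positive_def by blast
  then show "psd n (\<phi> A)"
    by (simp add: psd_flatten_single)
qed

lemma completely_copositive_imp_positive:
  assumes "completely_copositive n \<phi>"
  shows "positive_map n \<phi>"
  unfolding positive_map_def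
proof (intro allI impI)
  fix A
  assume "psd n A"
  moreover have "positive_map n (\<phi> \<circ> mat_transpose)"
    using assms by (simp add: completely_copositive_def completely_positive_imp_positive)
  ultimately have "psd n ((\<phi> \<circ> mat_transpose) (mat_transpose A))"
    by (simp add: positive_map_def psd_transpose)
  moreover have "mat_transpose (mat_transpose A) = A"
    by (simp add: mat_transpose_def)
  ultimately show "psd n (\<phi> A)"
    by simp
qed

lemma decomposable_imp_positive:
  assumes "decomposable n \<phi>"
  shows "positive_map n \<phi>"
proof -
  obtain \<phi>1 \<phi>2 where cp: "completely_positive n \<phi>1" and ccp: "completely_copositive n \<phi>2"
    and sum: "\<And>A i j. i < n \<Longrightarrow> j < n \<Longrightarrow> \<phi> A i j = \<phi>1 A i j + \<phi>2 A i j"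
    using assms unfolding decomposable_def by blast
  have "positive_map n \<phi>1" "positive_map n \<phi>2"
    using cp ccp by (simp_all add: completely_positive_imp_positive completely_copositive_imp_positive)
  then show ?thesis
    unfolding positive_map_def by (blast intro: psd_add sum)
qed

definition two_point :: "nat \<Rightarrow> nat \<Rightarrow> complex \<Rightarrow> complex \<Rightarrow> nat \<Rightarrow> complex" where
  "two_point i j a b = (\<lambda>l. (if l = i then a else 0) - (if l = j then b else 0))"

lemma sum_mult_two_point:
  assumes "i < n" "j < n"
  shows "(\<Sum>l<n. f l * two_point i j a b l) = f i * a - f j * b"
  using assms
  by (simp add: two_point_def right_diff_distrib sum_subtractf if_distrib[of "\<lambda>x. _ * x"] cong: if_cong)

lemma sesq_form_two_point:
  assumes "i < n" "j < n"
  shows "sesq_form n M (two_point i j a b) (two_point i j c d) =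
    cnj a * M i i * c - cnj a * M i j * d - cnj b * M j i * c + cnj b * M j j * d"
proof -
  have "sesq_form n M (two_point i j a b) (two_point i j c d)
      = (\<Sum>l<n. (M l i * c - M l j * d) * cnj (two_point i j a b l))"
    unfolding sesq_form_def
  proof (rule sum.cong[OF refl])
    fix l
    have "(\<Sum>l'<n. cnj (two_point i j a b l) * M l l' * two_point i j c d l')
        = cnj (two_point i j a b l) * (\<Sum>l'<n. M l l' * two_point i j c d l')"
      by (simp add: sum_distrib_left mult.assoc)
    then show "(\<Sum>l'<n. cnj (two_point i j a b l) * M l l' * two_point i j c d l')
        = (M l i * c - M l j * d) * cnj (two_point i j a b l)"
      by (simp add: sum_mult_two_point assms)
  qed
  also have "\<dots> = (\<Sum>l<n. (M l i * c - M l j * d) * two_point i j (cnj a) (cnj b) l)"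
    by (auto simp: two_point_def intro!: sum.cong)
  also have "\<dots> = (M i i * c - M i j * d) * cnj a - (M j i * c - M j j * d) * cnj b"
    by (rule sum_mult_two_point[OF assms])
  finally show ?thesis
    by (simp add: algebra_simps)
qed

text \<open>The Schur product of \<open>M\<close> with the Laplacian of the graph with adjacency relation \<open>P\<close>
  (a loop contributes nothing).\<close>

definition laplacian_schur :: "nat \<Rightarrow> (nat \<Rightarrow> nat \<Rightarrow> bool) \<Rightarrow> cmat \<Rightarrow> cmat" where
  "laplacian_schur n P M = (\<lambda>i j.
     (if i = j then (\<Sum>l<n. of_bool (P i l)) * M i i else 0) - of_bool (P i j) * M i j)"

definition edge_vector :: "(nat \<Rightarrow> nat \<Rightarrow> bool) \<Rightarrow> nat \<times> nat \<Rightarrow> (nat \<Rightarrow> complex) \<Rightarrow> nat \<Rightarrow> complex"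
  where "edge_vector P = (\<lambda>(i, j) u. if P i j then two_point i j (u i) (u j) else (\<lambda>_. 0))"

lemma sum_symmetric_swap:
  assumes "\<And>i j. i < n \<Longrightarrow> j < n \<Longrightarrow> P i j \<longleftrightarrow> P j i"
  shows "(\<Sum>i<n. \<Sum>j<n. of_bool (P i j) * f j i) = (\<Sum>i<n. \<Sum>j<n. of_bool (P i j) * f i j)"
proof -
  have "(\<Sum>i<n. \<Sum>j<n. of_bool (P i j) * f j i) = (\<Sum>j<n. \<Sum>i<n. of_bool (P i j) * f j i)"
    by (rule sum.swap)
  also have "\<dots> = (\<Sum>i<n. \<Sum>j<n. of_bool (P i j) * f i j)"
    using assms by (intro sum.cong refl) auto
  finally show ?thesis .
qed

lemma laplacian_schur_kraus:
  assumes P_sym: "\<And>i j. i < n \<Longrightarrow> j < n \<Longrightarrow> P i j \<longleftrightarrow> P j i"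
  shows "2 * sesq_form n (laplacian_schur n P M) u v
    = (\<Sum>r\<in>{..<n} \<times> {..<n}. sesq_form n M (edge_vector P r u) (edge_vector P r v))"
proof -
  define Diag where "Diag = (\<Sum>i<n. \<Sum>j<n. of_bool (P i j) * (cnj (u i) * M i i * v i))"
  define Off where "Off = (\<Sum>i<n. \<Sum>j<n. of_bool (P i j) * (cnj (u i) * M i j * v j))"
  have "(\<Sum>r\<in>{..<n} \<times> {..<n}. sesq_form n M (edge_vector P r u) (edge_vector P r v))
      = (\<Sum>i<n. \<Sum>j<n. of_bool (P i j) * (cnj (u i) * M i i * v i - cnj (u i) * M i j * v j
           - cnj (u j) * M j i * v i + cnj (u j) * M j j * v j))"
    unfolding sum.cartesian_product
    by (intro sum.cong refl) (auto simp: edge_vector_def sesq_form_two_point, simp add: sesq_form_def)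
  also have "\<dots> = Diag - Off
      - (\<Sum>i<n. \<Sum>j<n. of_bool (P i j) * (cnj (u j) * M j i * v i))
      + (\<Sum>i<n. \<Sum>j<n. of_bool (P i j) * (cnj (u j) * M j j * v j))"
    unfolding Diag_def Off_def by (simp add: algebra_simps sum.distrib sum_subtractf)
  also have "\<dots> = 2 * (Diag - Off)"
    using sum_symmetric_swap[OF P_sym, where f="\<lambda>i j. cnj (u i) * M i j * v j"]
      sum_symmetric_swap[OF P_sym, where f="\<lambda>i j. cnj (u i) * M i i * v i"]
    unfolding Diag_def Off_def by simp
  also have "Diag - Off = sesq_form n (laplacian_schur n P M) u v"
  proof -
    have "Diag = (\<Sum>i<n. (\<Sum>l<n. of_bool (P i l)) * (cnj (u i) * M i i * v i))"
      unfolding Diag_def by (simp add: sum_distrib_right)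
    also have "\<dots> = (\<Sum>i<n. \<Sum>j<n.
        if j = i then cnj (u i) * ((\<Sum>l<n. of_bool (P i l)) * M i i) * v j else 0)"
      by (simp add: mult_ac)
    also have "\<dots> = (\<Sum>i<n. \<Sum>j<n.
        cnj (u i) * (if i = j then (\<Sum>l<n. of_bool (P i l)) * M i i else 0) * v j)"
      by (intro sum.cong refl) auto
    finally show ?thesis
      unfolding Off_def sesq_form_def laplacian_schur_def
      by (simp add: algebra_simps sum_subtractf)
  qed
  finally show ?thesis ..
qed

lemma sum_involution_reindex:
  assumes "\<And>i. i < n \<Longrightarrow> \<tau> i < n \<and> \<tau> (\<tau> i) = i"
  shows "(\<Sum>i<n. f (\<tau> i)) = (\<Sum>i<n. f i)"
  by (rule sum.reindex_bij_witness[where i=\<tau> and j=\<tau>]) (use assms in auto)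

lemma sesq_form_relabel:
  assumes inv: "\<And>i. i < n \<Longrightarrow> \<tau> i < n \<and> \<tau> (\<tau> i) = i"
  shows "sesq_form n (\<lambda>i j. M (\<tau> i) (\<tau> j)) u v = sesq_form n M (u \<circ> \<tau>) (v \<circ> \<tau>)"
proof -
  have "sesq_form n M (u \<circ> \<tau>) (v \<circ> \<tau>)
      = (\<Sum>i<n. \<Sum>j<n. cnj (u (\<tau> (\<tau> i))) * M (\<tau> i) j * v (\<tau> j))"
    unfolding sesq_form_def comp_def by (rule sum_involution_reindex[OF inv, symmetric])
  also have "\<dots> = (\<Sum>i<n. \<Sum>j<n. cnj (u (\<tau> (\<tau> i))) * M (\<tau> i) (\<tau> j) * v (\<tau> (\<tau> j)))"
    by (intro sum.cong refl sum_involution_reindex[OF inv, symmetric])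
  also have "\<dots> = sesq_form n (\<lambda>i j. M (\<tau> i) (\<tau> j)) u v"
    unfolding sesq_form_def using inv by (intro sum.cong refl) auto
  finally show ?thesis ..
qed

lemma completely_positive_laplacian_schur_relabel:
  assumes "n > 0"
    and P_sym: "\<And>i j. i < n \<Longrightarrow> j < n \<Longrightarrow> P i j \<longleftrightarrow> P j i"
    and inv: "\<And>i. i < n \<Longrightarrow> \<tau> i < n \<and> \<tau> (\<tau> i) = i"
  shows "completely_positive n (\<lambda>M. laplacian_schur n P (\<lambda>i j. M (\<tau> i) (\<tau> j)))"
proof (rule completely_positive_if_kraus[OF assms(1) _ _, where c=2 and R="{..<n} \<times> {..<n}"
      and g="\<lambda>r u. edge_vector P r u \<circ> \<tau>"])
  fix M u v
  show "of_real 2 * sesq_form n (laplacian_schur n P (\<lambda>i j. M (\<tau> i) (\<tau> j))) u v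
      = (\<Sum>r\<in>{..<n} \<times> {..<n}. sesq_form n M (edge_vector P r u \<circ> \<tau>) (edge_vector P r v \<circ> \<tau>))"
    by (simp add: laplacian_schur_kraus[OF P_sym] sesq_form_relabel[OF inv])
qed simp_all

lemma sigma_shift_less: "n > 0 \<Longrightarrow> sigma_shift n i < n"
  by (simp add: sigma_shift_def)

lemma sigma_shift_sigma_shift:
  assumes "even n" "i < n"
  shows "sigma_shift n (sigma_shift n i) = i"
proof -
  obtain h where h: "n = 2 * h"
    using assms(1) by (auto elim: evenE)
  have "(i + h + h) mod (2 * h) = (i + 2 * h) mod (2 * h)"
    by (simp add: mult_2 add.assoc)
  then show ?thesis
    using h assms(2) by (simp add: sigma_shift_def mod_add_left_eq)
qed

lemma sigma_shift_neq:
  assumes "n \<ge> 2" "i < n"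
  shows "sigma_shift n i \<noteq> i"
proof
  assume "sigma_shift n i = i"
  moreover have "0 < n div 2" "n div 2 < n"
    using assms(1) by auto
  ultimately show False
    using assms(2) by (cases "i + n div 2 < n") (auto simp: sigma_shift_def mod_if split: if_splits)
qed

lemma Phi_eq_laplacian_schur_sum:
  assumes "even n" "n > 2" "i < n" "j < n"
  shows "Phi n A i j = laplacian_schur n (\<lambda>i j. j \<noteq> i \<and> j \<noteq> sigma_shift n i) A i j
    + laplacian_schur n (\<lambda>i j. j = sigma_shift n i) (\<lambda>a b. A (sigma_shift n b) (sigma_shift n a)) i j"
proof (cases "i = j")
  case True
  have "{..<n} \<inter> {l. l \<noteq> i \<and> l \<noteq> sigma_shift n i} = {..<n} - {i, sigma_shift n i}"
    by auto
  moreover have "card ({..<n} - {i, sigma_shift n i}) = n - 2"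
    using assms sigma_shift_neq[of n i] sigma_shift_less[of n i] by (subst card_Diff_subset) auto
  ultimately have deg: "(\<Sum>l<n. of_bool (l \<noteq> i \<and> l \<noteq> sigma_shift n i) :: complex) = of_nat n - 2"
    using assms(2) by (simp add: of_nat_diff)
  have deg_matching: "(\<Sum>l<n. of_bool (l = sigma_shift n i) :: complex) = 1"
    using assms(2) by (simp add: sigma_shift_less)
  have "i \<noteq> sigma_shift n i"
    using assms sigma_shift_neq[of n i] by simp
  then show ?thesis
    unfolding True Phi_def laplacian_schur_def deg[unfolded True] deg_matching[unfolded True]
    by (simp add: algebra_simps)
next
  case False
  then show ?thesis
    using assms by (auto simp: Phi_def laplacian_schur_def sigma_shift_sigma_shift)
qed

lemma decomposable_Phi:
  assumes "even n" "n > 2"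
  shows "decomposable n (Phi n)"
  unfolding decomposable_def
proof (intro exI conjI allI impI)
  let ?\<sigma> = "sigma_shift n"
  have involution: "?\<sigma> i < n \<and> ?\<sigma> (?\<sigma> i) = i" if "i < n" for i
    using assms that by (simp add: sigma_shift_less sigma_shift_sigma_shift)
  have adj_sym: "(j \<noteq> i \<and> j \<noteq> ?\<sigma> i) \<longleftrightarrow> (i \<noteq> j \<and> i \<noteq> ?\<sigma> j)" "j = ?\<sigma> i \<longleftrightarrow> i = ?\<sigma> j"
    if "i < n" "j < n" for i j
    using involution that by metis+
  show "completely_positive n (laplacian_schur n (\<lambda>i j. j \<noteq> i \<and> j \<noteq> ?\<sigma> i))"
    using completely_positive_laplacian_schur_relabel[where \<tau>=id] assms adj_sym(1) by simp
  have "completely_positive n (\<lambda>M. laplacian_schur n (\<lambda>i j. j = ?\<sigma> i) (\<lambda>a b. M (?\<sigma> a) (?\<sigma> b)))"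
    using assms adj_sym(2) involution by (intro completely_positive_laplacian_schur_relabel) auto
  then show "completely_copositive n
      (\<lambda>A. laplacian_schur n (\<lambda>i j. j = ?\<sigma> i) (\<lambda>a b. A (?\<sigma> b) (?\<sigma> a)))"
    by (simp add: completely_copositive_def comp_def mat_transpose_def)
qed (use assms in \<open>simp_all add: Phi_eq_laplacian_schur_sum linear_map_n_def laplacian_schur_def
  algebra_simps\<close>)

theorem corollary3:
  fixes n :: nat
  assumes "even n" and "n > 2"
  shows "linear_map_n n (Phi n) \<and> positive_map n (Phi n) \<and> decomposable n (Phi n)"
proof -
  have "linear_map_n n (Phi n)"
    by (simp add: linear_map_n_def Phi_def algebra_simps)
  moreover have "decomposable n (Phi n)"
    using assms by (rule decomposable_Phi)
  ultimately show ?thesis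
    by (simp add: decomposable_imp_positive)
qed

end
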